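(* Let $n=p^{\alpha}qr$ where $p,q,r$ are distinct primes and $\alpha\geq 1$ is an integer. Then $\mathbb{AG}(\mathbb{Z}_n)$ has no induced cycle of odd length greater than $3$.
   Context: For a commutative ring $R$ with unity, the annihilating-ideal graph $\mathbb{AG}(R)$ is the simple graph whose vertex set is the set of all non-zero ideals of $R$ with non-zero annihilator, two distinct vertices $I,J$ being adjacent if and only if $IJ=0$. An induced cycle is a cycle in the graph with no chords, i.e. an induced subgraph isomorphic to a cycle. *)

theory Defs
  imports "HOL-Algebra.Ideal_Product" "HOL-Number_Theory.Residues"
begin

definition ann :: "('a, 'b) ring_scheme \<Rightarrow> 'a set \<Rightarrow> 'a set" where
  "ann R I = {x \<in> carrier R. \<forall>y \<in> I. x \<otimes>\<^bsub>R\<^esub> y = \<zero>\<^bsub>R\<^esub>}"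

definition AG_vertex :: "('a, 'b) ring_scheme \<Rightarrow> 'a set \<Rightarrow> bool" where
  "AG_vertex R I \<longleftrightarrow> ideal I R \<and> I \<noteq> {\<zero>\<^bsub>R\<^esub>} \<and> ann R I \<noteq> {\<zero>\<^bsub>R\<^esub>}"

definition AG_adj :: "('a, 'b) ring_scheme \<Rightarrow> 'a set \<Rightarrow> 'a set \<Rightarrow> bool" where
  "AG_adj R I J \<longleftrightarrow> AG_vertex R I \<and> AG_vertex R J \<and> I \<noteq> J \<and> ideal_prod R I J = {\<zero>\<^bsub>R\<^esub>}"

definition AG_induced_cycle :: "('a, 'b) ring_scheme \<Rightarrow> nat \<Rightarrow> (nat \<Rightarrow> 'a set) \<Rightarrow> bool" where
  "AG_induced_cycle R k v \<longleftrightarrow> 3 \<le> k \<and> inj_on v {0..<k} \<and> (\<forall>i<k. AG_vertex R (v i)) \<and>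
     (\<forall>i<k. \<forall>j<k. AG_adj R (v i) (v j) \<longleftrightarrow> (j = Suc i mod k \<or> i = Suc j mod k))"

end

theory Submission
  imports Defs
begin

(*
  Every ideal of Z_n is the set of multiples of a divisor d of n, and IJ = 0 is inherited by
  subideals of I. Hence no vertex of an induced cycle of length at least 5 in AG(R) contains
  another: if v_y is contained in v_x, some neighbour z of x is not adjacent to y, yet
  v_y v_z is contained in v_x v_z = 0. On the other hand, the divisors of p^a q r fall into
  four classes according to divisibility by q and by r, and each class is totally ordered by
  divisibility; so among five vertices of the cycle two are nested.
*)

lemma dvd_gcd_mult_gcd_if_coprime:
  fixes a b d :: "'a :: semiring_gcd"
  assumes "coprime a b" "d dvd a * b"
  shows "d dvd gcd d a * gcd d b"
proof -
  have "d dvd gcd (d * b) (a * b)"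
    using assms(2) by simp
  then have "d dvd gcd d a * b"
    by (simp add: gcd_mult_right gcd.commute)
  moreover have "d dvd gcd d a * d"
    by simp
  ultimately have "d dvd gcd (gcd d a * b) (gcd d a * d)"
    by simp
  then show ?thesis
    by (simp add: gcd_mult_left gcd.commute)
qed

lemma dvd_if_gcd_coprime_factors_dvd:
  fixes a b d e :: "'a :: semiring_gcd"
  assumes "coprime a b" "d dvd a * b" "gcd d a dvd e" "gcd d b dvd e"
  shows "d dvd e"
proof -
  have "coprime (gcd d a) (gcd d b)"
    using assms(1) by (rule coprime_divisors[rotated 2]) simp_all
  then have "gcd d a * gcd d b dvd e"
    using assms(3,4) by (simp add: divides_mult)
  then show ?thesis
    using dvd_gcd_mult_gcd_if_coprime[OF assms(1,2)] dvd_trans by blast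
qed

lemma gcd_prime_dvd:
  fixes p d e :: "'a :: factorial_semiring_gcd"
  assumes "prime p" "p dvd d \<Longrightarrow> p dvd e"
  shows "gcd d p dvd e"
proof (cases "p dvd d")
  case True
  then show ?thesis using assms(2) dvd_trans gcd_dvd2 by blast
next
  case False
  then have "coprime d p"
    using assms(1) prime_imp_coprime coprime_commute by blast
  then show ?thesis by simp
qed

lemma prime_power_divisors_comparable:
  fixes p x y :: "'a :: factorial_semiring_multiplicative"
  assumes "prime p" "x dvd p ^ n" "y dvd p ^ n"
  shows "x dvd y \<or> y dvd x"
proof -
  obtain i j where "normalize x = p ^ i" "normalize y = p ^ j"
    using divides_primepow[OF assms(1,2)] divides_primepow[OF assms(1,3)] by metis
  then show ?thesis
    by (metis le_cases le_imp_power_dvd normalize_dvd_iff dvd_normalize_iff)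
qed

lemma divisors_comparable_if_same_dvd_q_r:
  fixes p q r d e :: int
  assumes primes: "prime p" "prime q" "prime r" "p \<noteq> q" "p \<noteq> r" "q \<noteq> r"
    and dvd: "d dvd p ^ a * q * r" "e dvd p ^ a * q * r"
    and q: "q dvd d \<longleftrightarrow> q dvd e" and r: "r dvd d \<longleftrightarrow> r dvd e"
  shows "d dvd e \<or> e dvd d"
proof -
  have coprime_qr: "coprime q r" and coprime_pqr: "coprime (p ^ a) (q * r)"
    using primes by (simp_all add: primes_coprime)
  have "d dvd e" if "gcd d (p ^ a) dvd gcd e (p ^ a)"
    "d dvd p ^ a * (q * r)" "q dvd d \<Longrightarrow> q dvd e" "r dvd d \<Longrightarrow> r dvd e" for d e
  proof (rule dvd_if_gcd_coprime_factors_dvd[OF coprime_pqr \<open>d dvd _\<close>])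
    show "gcd d (p ^ a) dvd e"
      using that(1) dvd_trans gcd_dvd1 by blast
    show "gcd d (q * r) dvd e"
    proof (rule dvd_if_gcd_coprime_factors_dvd[OF coprime_qr])
      show "gcd (gcd d (q * r)) q dvd e" "gcd (gcd d (q * r)) r dvd e"
        using primes that(3,4) by (auto intro!: gcd_prime_dvd)
    qed simp
  qed
  moreover have "gcd d (p ^ a) dvd gcd e (p ^ a) \<or> gcd e (p ^ a) dvd gcd d (p ^ a)"
    using primes(1) by (rule prime_power_divisors_comparable[where n = a]) simp_all
  ultimately show ?thesis
    using dvd q r by (metis mult.assoc)
qed
lemma two_of_five_divisors_comparable:
  fixes p q r :: int and D :: "nat \<Rightarrow> int"
  assumes "prime p" "prime q" "prime r" "p \<noteq> q" "p \<noteq> r" "q \<noteq> r"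
    and "\<And>i. i < 5 \<Longrightarrow> D i dvd p ^ a * q * r"
  obtains i j where "i < 5" "j < 5" "i \<noteq> j" "D i dvd D j"
proof -
  let ?class = "\<lambda>i. (q dvd D i, r dvd D i)"
  have "card (?class ` {0..<5}) \<le> card (UNIV :: (bool \<times> bool) set)"
    by (rule card_mono) simp_all
  then have "\<not> inj_on ?class {0..<5}"
    by (intro pigeonhole) (simp add: card_UNIV_bool flip: UNIV_Times_UNIV)
  then obtain i j where ij: "i < 5" "j < 5" "i \<noteq> j" "?class i = ?class j"
    by (auto simp: inj_on_def)
  then have "D i dvd D j \<or> D j dvd D i"
    by (intro divisors_comparable_if_same_dvd_q_r[OF assms(1-6) assms(7) assms(7)]) simp_all
  then show ?thesis
    using ij that by metis
qed

context residues
begin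

lemma ideal_mod_lincomb_closed:
  assumes "ideal I R" "x mod m \<in> I" "y mod m \<in> I"
  shows "(a * x + b * y) mod m \<in> I"
proof -
  have "(a mod m) \<otimes> (x mod m) \<oplus> (b mod m) \<otimes> (y mod m) \<in> I"
    using assms by (simp add: ideal.I_l_closed additive_subgroup.a_closed ideal.axioms(1))
  then show ?thesis
    by (simp add: mult_cong add_cong)
qed

lemma carrier_mod_eq: "x \<in> carrier R \<Longrightarrow> x mod m = x"
  by (simp add: res_carrier_eq)

lemma ideal_gcd_Gcd_mod_mem:
  assumes I: "ideal I R" and S: "finite S" "S \<subseteq> I"
  shows "gcd m (Gcd S) mod m \<in> I"
  \<comment> \<open>Reduction mod m is needed because gcd m (Gcd {}) = m is not in the carrier.\<close>
  using S
proof (induction S rule: finite_induct)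
  case empty
  have "\<zero> \<in> I"
    using I by (simp add: additive_subgroup.zero_closed ideal.axioms(1))
  with m_gt_one show ?case
    by (simp add: res_zero_eq)
next
  case (insert x S)
  have "gcd m (Gcd (insert x S)) = gcd x (gcd m (Gcd S))"
    by (simp add: gcd.left_commute)
  moreover obtain u w where "u * x + w * gcd m (Gcd S) = gcd x (gcd m (Gcd S))"
    using bezout_int by blast
  moreover have "x mod m \<in> I"
    using insert.prems I ideal.Icarr carrier_mod_eq by fastforce
  moreover have "gcd m (Gcd S) mod m \<in> I"
    using insert by simp
  ultimately show ?case
    using ideal_mod_lincomb_closed[OF I, of x "gcd m (Gcd S)" u w] by metis
qed

lemma ideal_eq_multiples:
  assumes I: "ideal I R"
  obtains d where "d > 0" "d dvd m" "I = {x \<in> carrier R. d dvd x}"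
proof
  define d where "d = gcd m (Gcd I)"
  show "d > 0" "d dvd m"
    using m_gt_one by (simp_all add: d_def)
  have "I \<subseteq> carrier R"
    using I by (simp add: ideal.Icarr subsetI)
  then have "finite I"
    using finite by (rule finite_subset)
  then have d_mem: "d mod m \<in> I"
    unfolding d_def using ideal_gcd_Gcd_mod_mem[OF I] by blast
  show "I = {x \<in> carrier R. d dvd x}"
  proof (intro equalityI subsetI CollectI conjI)
    fix x assume "x \<in> I"
    then show "x \<in> carrier R"
      using \<open>I \<subseteq> carrier R\<close> by blast
    from \<open>x \<in> I\<close> have "Gcd I dvd x"
      by (rule Gcd_dvd)
    then show "d dvd x"
      unfolding d_def using dvd_trans gcd_dvd2 by blast
  next
    fix x assume "x \<in> {x \<in> carrier R. d dvd x}"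
    then obtain c where "x = c * d" "x \<in> carrier R"
      by (metis (mono_tags) dvd_def mem_Collect_eq mult.commute)
    then show "x \<in> I"
      using ideal_mod_lincomb_closed[OF I d_mem d_mem, of c 0] carrier_mod_eq by simp
  qed
qed

end

lemma ideal_prod_mono_left:
  assumes "J' \<subseteq> J"
  shows "ideal_prod R J' K \<subseteq> ideal_prod R J K"
proof
  fix s assume "s \<in> ideal_prod R J' K"
  then show "s \<in> ideal_prod R J K"
    using assms by (induct s rule: ideal_prod.induct) (auto intro: ideal_prod.intros)
qed

lemma AG_adj_subset:
  assumes "ring R" "AG_adj R I K" "AG_vertex R J" "J \<noteq> K" "J \<subseteq> I"
  shows "AG_adj R J K"
proof -
  have ideals: "ideal J R" "ideal K R"
    using assms(2,3) by (simp_all add: AG_adj_def AG_vertex_def)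
  have "ideal_prod R J K \<subseteq> ideal_prod R I K"
    using assms(5) by (rule ideal_prod_mono_left)
  also have "\<dots> = {\<zero>\<^bsub>R\<^esub>}"
    using assms(2) by (simp add: AG_adj_def)
  finally have "ideal_prod R J K \<subseteq> {\<zero>\<^bsub>R\<^esub>}" .
  moreover have "\<zero>\<^bsub>R\<^esub> \<in> ideal_prod R J K"
    using ring.ideal_prod_is_ideal[OF assms(1) ideals]
    by (simp add: additive_subgroup.zero_closed ideal.axioms(1))
  ultimately show ?thesis
    using assms(2-4) by (auto simp: AG_adj_def)
qed

lemma cycle_neighbour_not_adjacent:
  fixes k x y :: nat
  assumes "5 \<le> k" "x < k" "y < k" "x \<noteq> y"
  obtains z where "z < k" "z \<noteq> y" "z = Suc x mod k \<or> x = Suc z mod k"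
    "\<not> (z = Suc y mod k \<or> y = Suc z mod k)"
proof -
  \<comment> \<open>For k = 4 this fails: the vertex opposite x is adjacent to both neighbours of x.\<close>
  define succ where "succ i = (if Suc i = k then 0 else Suc i)" for i
  define pred where "pred i = (if i = 0 then k - 1 else i - 1)" for i
  have succ: "Suc i mod k = succ i" if "i < k" for i
    using that by (simp add: succ_def)
  have "succ x \<noteq> y \<and> \<not> (succ x = succ y \<or> y = succ (succ x)) \<or>
        pred x \<noteq> y \<and> \<not> (pred x = succ y \<or> y = succ (pred x))"
    using assms unfolding succ_def pred_def by auto
  moreover have "succ x < k" "pred x < k" "x = succ (pred x)"
    using assms by (auto simp: succ_def pred_def)
  ultimately show ?thesis
    using that assms succ by metis
qed

lemma AG_induced_cycle_vertex_subset_eq: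
  assumes "ring R" "AG_induced_cycle R k v" "5 \<le> k" "x < k" "y < k" "v y \<subseteq> v x"
  shows "x = y"
proof (rule ccontr)
  assume "x \<noteq> y"
  have inj: "inj_on v {0..<k}" and vertex: "\<And>i. i < k \<Longrightarrow> AG_vertex R (v i)"
    and adj: "\<And>i j. i < k \<Longrightarrow> j < k \<Longrightarrow>
      AG_adj R (v i) (v j) \<longleftrightarrow> (j = Suc i mod k \<or> i = Suc j mod k)"
    using assms(2) by (simp_all add: AG_induced_cycle_def)
  obtain z where z: "z < k" "z \<noteq> y" "z = Suc x mod k \<or> x = Suc z mod k"
    "\<not> (z = Suc y mod k \<or> y = Suc z mod k)"
    using cycle_neighbour_not_adjacent[OF assms(3-5) \<open>x \<noteq> y\<close>] .
  have "v y \<noteq> v z"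
    using inj z(1,2) assms(5) by (auto dest: inj_onD)
  then have "AG_adj R (v y) (v z)"
    using AG_adj_subset[OF assms(1)] adj vertex z(1,3) assms(4-6) by blast
  then show False
    using adj z(1,4) assms(5) by blast
qed

lemma (in residues) AG_induced_cycle_generators_incomparable:
  assumes "AG_induced_cycle R k v" "5 \<le> k"
  obtains D where "\<And>i. i < k \<Longrightarrow> D i dvd m" "\<And>i j. i < k \<Longrightarrow> j < k \<Longrightarrow> D i dvd D j \<Longrightarrow> i = j"
proof -
  have "\<exists>d. d dvd m \<and> v i = {x \<in> carrier R. d dvd x}" if "i < k" for i
    using assms(1) that ideal_eq_multiples by (metis AG_induced_cycle_def AG_vertex_def)
  then obtain D where D: "\<And>i. i < k \<Longrightarrow> D i dvd m \<and> v i = {x \<in> carrier R. D i dvd x}"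
    by metis
  have "i = j" if "i < k" "j < k" "D i dvd D j" for i j
  proof -
    have "v j \<subseteq> v i"
      using D that by (auto intro: dvd_trans)
    then show ?thesis
      using AG_induced_cycle_vertex_subset_eq[OF ring_axioms assms] that by blast
  qed
  then show ?thesis
    using D that by blast
qed

theorem lemma4:
  fixes p q r \<alpha> k :: nat and n :: int and v :: "nat \<Rightarrow> int set"
  assumes "prime p" "prime q" "prime r" "p \<noteq> q" "p \<noteq> r" "q \<noteq> r"
    and "\<alpha> \<ge> 1"
    and "n = int (p ^ \<alpha> * q * r)"
    and "odd k" and "k > 3"
  shows "\<not> AG_induced_cycle (residue_ring n) k v"
proof
  assume cycle: "AG_induced_cycle (residue_ring n) k v"
  have "5 \<le> k"
    using \<open>odd k\<close> \<open>k > 3\<close> by presburger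
  have "1 < q * r"
    using prime_gt_1_nat[OF \<open>prime q\<close>] prime_gt_1_nat[OF \<open>prime r\<close>] by (simp add: one_less_mult)
  also have "\<dots> \<le> p ^ \<alpha> * q * r"
    using \<open>prime p\<close> by (simp add: prime_gt_0_nat Suc_le_eq mult.assoc)
  finally have "1 < n"
    using \<open>n = _\<close> by linarith
  then interpret residues n "residue_ring n"
    by unfold_locales simp_all
  obtain D where D: "\<And>i. i < k \<Longrightarrow> D i dvd n"
    and incomparable: "\<And>i j. i < k \<Longrightarrow> j < k \<Longrightarrow> D i dvd D j \<Longrightarrow> i = j"
    using AG_induced_cycle_generators_incomparable[OF cycle \<open>5 \<le> k\<close>] by blast
  obtain i j where "i < 5" "j < 5" "i \<noteq> j" "D i dvd D j"
  proof (rule two_of_five_divisors_comparable[of "int p" "int q" "int r" D \<alpha>])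
    show "D i dvd int p ^ \<alpha> * int q * int r" if "i < 5" for i
      using D[of i] that \<open>5 \<le> k\<close> \<open>n = _\<close> by simp
  qed (use assms(1-6) in simp_all)
  then show False
    using incomparable \<open>5 \<le> k\<close> by simp
qed

end
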